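(* For any pointed irregular type $Q$ with $K=\max_i\mathrm{slope}(q_i)$, the spaces $\mathbf{SB}(Q)$ and $\mathbf B(Q)$ (which are complex manifolds, Zariski open in complex vector spaces) are homotopy equivalent, and $\dim_{\mathbb C}\mathbf{SB}(Q)=\dim_{\mathbb C}\mathbf B(Q)-\lfloor K\rfloor$.
   Context: Exponential factors: finite sums $q=\sum_ka_kx^k$, $a_k\in\mathbb C$, $k\in\mathbb Q_{>0}$; $\mathrm{slope}(q)$ = largest exponent with nonzero coefficient ($0$ if $q=0$); $\mathrm{ram}(q)$ = least $r\ge1$ with $q\in x^{1/r}\mathbb C[x^{1/r}]$. Galois operator $\sigma(\sum a_kx^k)=\sum a_ke^{-2\pi\sqrt{-1}k}x^k$. Pointed irregular type: $Q=[(n_1,q_1),\dots,(n_m,q_m)]$ with $n_i\in\mathbb N_{>0}$, $q_i$ in pairwise distinct Galois orbits; $Q'\sim Q$ means same length and multiplicities and $\mathrm{slope}(\sigma^k(q'_i)-\sigma^l(q'_j))=\mathrm{slope}(\sigma^k(q_i)-\sigma^l(q_j))$ for all $i,j$, $0\le k\le\mathrm{ram}(q_i)$, $0\le l\le\mathrm{ram}(q_j)$. Configuration spaces: $r=\mathrm{lcm}_i\mathrm{ram}(q_i)$, $K=\max_i\mathrm{slope}(q_i)$, $s=rK$; for $\mathbf a\in\mathbb C^{ms}$, $Q_{\mathbf a}=[(n_i,\sum_{j=1}^sa_{i,j}x^{j/r})]_{i=1}^m$. $\mathbf B(Q)=\{\mathbf a:Q_{\mathbf a}\sim Q\}$ with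 subspace topology; $\mathbf{SB}(Q)=\{\mathbf a\in\mathbf B(Q):\mathrm{Tr}(Q_{\mathbf a})=0\}$ where $\mathrm{Tr}([(n_i,p_i)])=\sum_in_i\sum_{t=0}^{\mathrm{ram}(p_i)-1}\sigma^t(p_i)$. *)

theory Defs
  imports "HOL-Analysis.Analysis" "HOL-Library.Function_Algebras"
begin

text \<open>Exponential factors: a finite sum of a_k x^k with k rational and positive,
  represented by its coefficient function rat to complex.\<close>
type_synonym expf = "rat \<Rightarrow> complex"

definition expfactor :: "expf \<Rightarrow> bool" where
  "expfactor q \<longleftrightarrow> finite {k. q k \<noteq> 0} \<and> (\<forall>k. q k \<noteq> 0 \<longrightarrow> k > 0)"

definition slope :: "expf \<Rightarrow> rat" where
  "slope q = (if {k. q k \<noteq> 0} = {} then 0 else Max {k. q k \<noteq> 0})"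

definition ram :: "expf \<Rightarrow> nat" where
  "ram q = (LEAST r::nat. r \<ge> 1 \<and> (\<forall>k. q k \<noteq> 0 \<longrightarrow> (\<exists>j::int. k = of_int j / of_nat r)))"

definition gal :: "expf \<Rightarrow> expf" where
  "gal q = (\<lambda>k. exp (- 2 * of_real pi * \<i> * of_rat k) * q k)"

definition fdiff :: "expf \<Rightarrow> expf \<Rightarrow> expf" where
  "fdiff p q = (\<lambda>k. p k - q k)"

text \<open>Pointed irregular types: lists of (multiplicity, exponential factor); indices from 0.\<close>
type_synonym pit = "(nat \<times> expf) list"

definition is_pit :: "pit \<Rightarrow> bool" where
  "is_pit Q \<longleftrightarrow> (\<forall>i < length Q. fst (Q ! i) > 0 \<and> expfactor (snd (Q ! i))) \<and>
     (\<forall>i < length Q. \<forall>j < length Q. i \<noteq> j \<longrightarrow>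
        (\<forall>t. (gal ^^ t) (snd (Q ! i)) \<noteq> snd (Q ! j)))"

definition pit_equiv :: "pit \<Rightarrow> pit \<Rightarrow> bool" (infix "\<sim>\<^sub>p" 50) where
  "Q' \<sim>\<^sub>p Q \<longleftrightarrow> is_pit Q' \<and> is_pit Q \<and> length Q' = length Q \<and> map fst Q' = map fst Q \<and>
     (\<forall>i < length Q. \<forall>j < length Q. \<forall>k \<le> ram (snd (Q ! i)). \<forall>l \<le> ram (snd (Q ! j)).
        slope (fdiff ((gal ^^ k) (snd (Q' ! i))) ((gal ^^ l) (snd (Q' ! j))))
      = slope (fdiff ((gal ^^ k) (snd (Q ! i))) ((gal ^^ l) (snd (Q ! j)))))"

definition ramQ :: "pit \<Rightarrow> nat" where
  "ramQ Q = Lcm (set (map (ram \<circ> snd) Q))"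

definition maxslope :: "pit \<Rightarrow> rat" where
  "maxslope Q = Max (insert 0 (set (map (slope \<circ> snd) Q)))"

definition sQ :: "pit \<Rightarrow> nat" where
  "sQ Q = nat \<lfloor>of_nat (ramQ Q) * maxslope Q\<rfloor>"

text \<open>Configurations: a point of C^(m s) is a function on index pairs (i,j), i < m, 1 \<le> j \<le> s,
  extended by zero elsewhere; the ambient function space carries the product topology,
  which on this finite-coordinate subspace is the Euclidean topology of C^(m s).\<close>
definition conf :: "nat \<Rightarrow> nat \<Rightarrow> (nat \<times> nat \<Rightarrow> complex) set" where
  "conf m s = {a. \<forall>i j. (i \<ge> m \<or> j = 0 \<or> j > s) \<longrightarrow> a (i, j) = 0}"

definition factor_of :: "nat \<Rightarrow> nat \<Rightarrow> (nat \<times> nat \<Rightarrow> complex) \<Rightarrow> nat \<Rightarrow> expf" where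
  "factor_of r s a i = (\<lambda>k. if \<exists>j::nat. 1 \<le> j \<and> j \<le> s \<and> k = of_nat j / of_nat r
                             then a (i, nat \<lfloor>k * of_nat r\<rfloor>) else 0)"

definition Q_a :: "pit \<Rightarrow> (nat \<times> nat \<Rightarrow> complex) \<Rightarrow> pit" where
  "Q_a Q a = map (\<lambda>i. (fst (Q ! i), factor_of (ramQ Q) (sQ Q) a i)) [0..<length Q]"

definition Bsp :: "pit \<Rightarrow> (nat \<times> nat \<Rightarrow> complex) set" where
  "Bsp Q = {a \<in> conf (length Q) (sQ Q). Q_a Q a \<sim>\<^sub>p Q}"

definition Tr :: "pit \<Rightarrow> expf" where
  "Tr Q = (\<lambda>k. \<Sum>i < length Q. of_nat (fst (Q ! i)) *
              (\<Sum>t < ram (snd (Q ! i)). (gal ^^ t) (snd (Q ! i)) k))"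

definition SBsp :: "pit \<Rightarrow> (nat \<times> nat \<Rightarrow> complex) set" where
  "SBsp Q = {a \<in> Bsp Q. Tr (Q_a Q a) = (\<lambda>_. 0)}"

text \<open>Complex-linear structure on configurations, and complex dimension (dimension of the
  complex span; for a set open in a complex subspace V this is dim V).\<close>
definition cscale :: "complex \<Rightarrow> (nat \<times> nat \<Rightarrow> complex) \<Rightarrow> (nat \<times> nat \<Rightarrow> complex)" where
  "cscale c a = (\<lambda>p. c * a p)"

definition cspan :: "(nat \<times> nat \<Rightarrow> complex) set \<Rightarrow> (nat \<times> nat \<Rightarrow> complex) set" where
  "cspan S = module.span cscale S"

definition cdim :: "(nat \<times> nat \<Rightarrow> complex) set \<Rightarrow> nat" where
  "cdim S = vector_space.dim cscale S"

end

theory Submission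
  imports Defs
begin

text \<open>A configuration lies in \<open>B(Q)\<close> iff every Galois-twisted difference of its factors vanishes
  above the prescribed slope (a linear condition) and is nonzero at that slope (an open condition),
  so \<open>B(Q)\<close> is open in a linear subspace; \<open>SB(Q)\<close> cuts it further by the linear trace conditions.
  The trace only sees integer exponents \<open>1, \<dots>, \<lfloor>K\<rfloor>\<close>, and adding one and the same polynomial in
  these exponents to every factor changes no twisted difference. Sliding each configuration linearly
  along these \<open>\<lfloor>K\<rfloor>\<close> directions until its trace vanishes deformation retracts \<open>B(Q)\<close> onto
  \<open>SB(Q)\<close> and splits off a complement of dimension \<open>\<lfloor>K\<rfloor>\<close>.\<close>

lemma of_rat_complex: "(of_rat e :: complex) = of_real (of_rat e)"
  by (cases e) (simp add: of_rat_rat)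

lemma sum_apply: "(sum f A) x = (\<Sum>a\<in>A. f a x)"
  by (induction A rule: infinite_finite_induct) auto

lemma Ints_mult_of_nat_mult: "(e :: rat) * of_nat r \<in> \<int> \<Longrightarrow> e * of_nat (r * t) \<in> \<int>"
  by (metis Ints_mult Ints_of_nat mult.assoc of_nat_mult)

lemma finite_rat_common_denominator:
  "finite (S :: rat set) \<Longrightarrow> \<exists>r::nat. r \<ge> 1 \<and> (\<forall>e\<in>S. e * of_nat r \<in> \<int>)"
proof (induction S rule: finite_induct)
  case empty
  show ?case by (intro exI[of _ 1]) auto
next
  case (insert x S)
  then obtain r :: nat where r: "r \<ge> 1" "\<forall>e\<in>S. e * of_nat r \<in> \<int>" by blast
  obtain a b where ab: "quotient_of x = (a, b)" by (cases "quotient_of x")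
  have b: "b > 0" using quotient_of_denom_pos[OF ab] .
  have "x * of_nat (nat b) = of_int a" using quotient_of_div[OF ab] b by simp
  then have x: "x * of_nat (nat b * r) \<in> \<int>" by (intro Ints_mult_of_nat_mult) simp
  show ?case
  proof (intro exI[of _ "nat b * r"] conjI ballI)
    show "1 \<le> nat b * r" using r b by simp
    fix e assume "e \<in> insert x S"
    then show "e * of_nat (nat b * r) \<in> \<int>"
      using x r(2) Ints_mult_of_nat_mult[of _ r "nat b"] by (auto simp: mult.commute)
  qed
qed

subsection \<open>The Galois action\<close>

definition gal_root :: "rat \<Rightarrow> complex" where
  "gal_root e = exp (- 2 * of_real pi * \<i> * of_rat e)"

lemma funpow_gal: "(gal ^^ k) q = (\<lambda>e. gal_root e ^ k * q e)"
  by (induction k) (auto simp: gal_def gal_root_def fun_eq_iff)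

lemma exp_minus_two_pi_i_eq_1_iff: "exp (Complex 0 (- 2 * pi * y)) = 1 \<longleftrightarrow> (\<exists>n::int. y = of_int n)"
proof -
  have "exp (Complex 0 (- 2 * pi * y)) = 1 \<longleftrightarrow> (\<exists>n::int. - 2 * pi * y = of_int (2 * n) * pi)"
    by (simp only: exp_eq_1 complex.sel simp_thms)
  also have "\<dots> \<longleftrightarrow> (\<exists>n::int. y = of_int n)"
  proof
    assume "\<exists>n::int. - 2 * pi * y = of_int (2 * n) * pi"
    then obtain n :: int where "- 2 * pi * y = of_int (2 * n) * pi" ..
    then have "pi * (y + of_int n) = 0" by (simp add: algebra_simps)
    then have "y = of_int (- n)" by simp
    then show "\<exists>n::int. y = of_int n" ..
  next
    assume "\<exists>n::int. y = of_int n"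
    then obtain n :: int where "y = of_int n" ..
    then have "- 2 * pi * y = of_int (2 * (- n)) * pi" by simp
    then show "\<exists>n::int. - 2 * pi * y = of_int (2 * n) * pi" ..
  qed
  finally show ?thesis .
qed

lemma gal_root_pow_eq_1_iff: "gal_root e ^ k = 1 \<longleftrightarrow> e * of_nat k \<in> \<int>"
proof -
  define x where "x = e * of_nat k"
  have "gal_root e ^ k = exp (Complex 0 (- 2 * pi * of_rat x))"
    unfolding gal_root_def exp_of_nat_mult[symmetric] x_def
    by (rule arg_cong[where f=exp]) (simp add: complex_eq_iff of_rat_mult of_rat_complex)
  then have "gal_root e ^ k = 1 \<longleftrightarrow> (\<exists>n::int. of_rat x = (of_int n :: real))"
    by (simp only: exp_minus_two_pi_i_eq_1_iff)
  also have "\<dots> \<longleftrightarrow> x \<in> \<int>"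
    by (metis Ints_cases Ints_of_int of_rat_eq_iff of_rat_of_int_eq)
  finally show ?thesis by (simp add: x_def)
qed

lemma gal_root_eq_1_iff: "gal_root e = 1 \<longleftrightarrow> e \<in> \<int>"
  using gal_root_pow_eq_1_iff[of e 1] by simp

definition on_grid :: "expf \<Rightarrow> nat \<Rightarrow> bool" where
  "on_grid q r \<longleftrightarrow> (\<forall>e. q e \<noteq> 0 \<longrightarrow> e * of_nat r \<in> \<int>)"

lemma funpow_gal_fixed_iff: "(gal ^^ k) q = q \<longleftrightarrow> on_grid q k"
proof -
  have "(gal ^^ k) q = q \<longleftrightarrow> (\<forall>e. q e \<noteq> 0 \<longrightarrow> gal_root e ^ k = 1)"
    by (auto simp: funpow_gal fun_eq_iff)
  then show ?thesis by (simp add: on_grid_def gal_root_pow_eq_1_iff)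
qed

lemma on_grid_dvd: "on_grid q r \<Longrightarrow> r dvd t \<Longrightarrow> on_grid q t"
  unfolding on_grid_def by (auto elim!: dvdE intro: Ints_mult_of_nat_mult)

lemma expfactor_on_grid: "expfactor q \<Longrightarrow> \<exists>r\<ge>1. on_grid q r"
  using finite_rat_common_denominator[of "{k. q k \<noteq> 0}"] by (auto simp: expfactor_def on_grid_def)

lemma ram_eq_Least_on_grid: "ram q = (LEAST r. r \<ge> 1 \<and> on_grid q r)"
proof -
  have grid_iff: "(\<exists>j::int. k = of_int j / of_nat r) \<longleftrightarrow> k * of_nat r \<in> \<int>"
    if "r \<ge> 1" for k :: rat and r :: nat
  proof
    assume "\<exists>j::int. k = of_int j / of_nat r"
    then obtain j :: int where "k = of_int j / of_nat r" ..
    then show "k * of_nat r \<in> \<int>" using that by simp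
  next
    assume "k * of_nat r \<in> \<int>"
    then obtain j :: int where "k * of_nat r = of_int j" by (auto elim: Ints_cases)
    then have "k = of_int j / of_nat r" using that by (simp add: field_simps)
    then show "\<exists>j::int. k = of_int j / of_nat r" ..
  qed
  show ?thesis
    unfolding ram_def on_grid_def
    by (rule arg_cong[where f=Least]) (auto simp: fun_eq_iff grid_iff)
qed

lemma ram_on_grid:
  assumes "r \<ge> 1" "on_grid q r"
  shows "ram q \<ge> 1" "on_grid q (ram q)" "\<And>k. 1 \<le> k \<Longrightarrow> k < ram q \<Longrightarrow> \<not> on_grid q k"
proof -
  let ?P = "\<lambda>r. r \<ge> 1 \<and> on_grid q r"
  have "?P (Least ?P)" using assms by (intro LeastI[of ?P r]) blast
  then show "ram q \<ge> 1" "on_grid q (ram q)" unfolding ram_eq_Least_on_grid by blast+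
  fix k assume "1 \<le> k" "k < ram q"
  then show "\<not> on_grid q k" unfolding ram_eq_Least_on_grid using not_less_Least by blast
qed

lemma ram_eqI:
  assumes "R \<ge> 1" "on_grid q R" "\<And>k. 1 \<le> k \<Longrightarrow> k < R \<Longrightarrow> \<not> on_grid q k"
  shows "ram q = R"
  unfolding ram_eq_Least_on_grid
  by (rule Least_equality) (use assms in \<open>auto simp: not_less[symmetric]\<close>)

lemma funpow_gal_mod:
  assumes "(gal ^^ R) p = p"
  shows "(gal ^^ t) p = (gal ^^ (t mod R)) p"
proof -
  have periodic: "(gal ^^ (R * n)) p = p" for n
    by (induction n) (auto simp: funpow_add assms)
  have "(gal ^^ t) p = (gal ^^ (t mod R + R * (t div R))) p" by simp
  also have "\<dots> = (gal ^^ (t mod R)) ((gal ^^ (R * (t div R))) p)" by (simp only: funpow_add comp_apply)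
  also have "\<dots> = (gal ^^ (t mod R)) p" by (simp only: periodic)
  finally show ?thesis .
qed

lemma sum_funpow_gal:
  assumes "on_grid q R" "R \<ge> 1"
  shows "(\<Sum>t<R. (gal ^^ t) q e) = (if e \<in> \<int> then of_nat R * q e else 0)"
proof (cases "q e = 0")
  case False
  then have "gal_root e ^ R = 1" using assms(1) by (simp add: on_grid_def gal_root_pow_eq_1_iff)
  moreover have "(\<Sum>t<R. (gal ^^ t) q e) = (\<Sum>t<R. gal_root e ^ t) * q e"
    by (simp add: funpow_gal sum_distrib_right)
  ultimately show ?thesis using assms(2) by (simp add: sum_gp_strict gal_root_eq_1_iff)
qed (simp add: funpow_gal)

lemma slope_eq_iff:
  assumes "expfactor f" "d \<ge> 0"
  shows "slope f = d \<longleftrightarrow> (\<forall>e>d. f e = 0) \<and> (d \<noteq> 0 \<longrightarrow> f d \<noteq> 0)"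
proof (cases "{k. f k \<noteq> 0} = {}")
  case True
  then show ?thesis by (auto simp: slope_def)
next
  case False
  let ?S = "{k. f k \<noteq> 0}"
  have fin: "finite ?S" and pos: "\<And>k. f k \<noteq> 0 \<Longrightarrow> k > 0"
    using assms(1) by (auto simp: expfactor_def)
  have M: "f (Max ?S) \<noteq> 0" using Max_in[OF fin False] by simp
  have le: "\<And>k. f k \<noteq> 0 \<Longrightarrow> k \<le> Max ?S" using Max_ge[OF fin] by auto
  have Mpos: "Max ?S > 0" using M pos by auto
  have sl: "slope f = Max ?S" unfolding slope_def by (rule if_not_P[OF False])
  show ?thesis
  proof
    assume "slope f = d"
    then show "(\<forall>e>d. f e = 0) \<and> (d \<noteq> 0 \<longrightarrow> f d \<noteq> 0)"
      using sl M le by (auto simp: not_le[symmetric])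
  next
    assume h: "(\<forall>e>d. f e = 0) \<and> (d \<noteq> 0 \<longrightarrow> f d \<noteq> 0)"
    then have "Max ?S \<le> d" using M by (meson not_le)
    then have "d \<le> Max ?S" using h le Mpos by auto
    with \<open>Max ?S \<le> d\<close> sl show "slope f = d" by simp
  qed
qed

lemma slope_nonneg:
  assumes "expfactor f"
  shows "slope f \<ge> 0"
proof (cases "{k. f k \<noteq> 0} = {}")
  case False
  then have "f (Max {k. f k \<noteq> 0}) \<noteq> 0" using Max_in assms by (auto simp: expfactor_def)
  then show ?thesis using assms False by (auto simp: slope_def expfactor_def intro: less_imp_le)
qed (simp add: slope_def)

lemma slope_eq_0_iff: "expfactor f \<Longrightarrow> slope f = 0 \<longleftrightarrow> f = (\<lambda>_. 0)"
  using slope_eq_iff[of f 0] by (auto simp: fun_eq_iff expfactor_def)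

interpretation cvs: vector_space cscale
  by unfold_locales (auto simp: cscale_def fun_eq_iff algebra_simps)

lemma openin_cspan_subspace_Int_open:
  assumes "cvs.subspace V" "open U"
  shows "openin (top_of_set (cspan (V \<inter> U))) (V \<inter> U)"
proof -
  have "cspan (V \<inter> U) \<subseteq> V" unfolding cspan_def using assms(1) by (intro cvs.span_minimal) auto
  moreover have "V \<inter> U \<subseteq> cspan (V \<inter> U)" unfolding cspan_def by (rule cvs.span_superset)
  ultimately have "V \<inter> U = cspan (V \<inter> U) \<inter> U" by auto
  then show ?thesis unfolding openin_open using assms(2) by blast
qed

lemma (in vector_space) independent_Un_separated:
  assumes "independent S" "finite I"
    and "\<And>n. n \<in> I \<Longrightarrow> subspace (Z n)" "\<And>n. n \<in> I \<Longrightarrow> S \<subseteq> Z n"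
    and "\<And>n n'. n \<in> I \<Longrightarrow> n' \<in> I \<Longrightarrow> v n' \<in> Z n \<longleftrightarrow> n' \<noteq> n"
  shows "independent (S \<union> v ` I)"
proof -
  have "independent (S \<union> v ` J)" if "J \<subseteq> I" for J
    using finite_subset[OF that assms(2)] that
  proof (induction J rule: finite_induct)
    case empty
    then show ?case using assms(1) by simp
  next
    case (insert n J)
    have n: "n \<in> I" using insert.prems by blast
    have "S \<union> v ` J \<subseteq> Z n" using assms(4,5) n insert by auto
    then have "span (S \<union> v ` J) \<subseteq> Z n" by (rule span_minimal[OF _ assms(3)[OF n]])
    moreover have "v n \<notin> Z n" using assms(5)[OF n n] by simp
    ultimately have "v n \<notin> span (S \<union> v ` J)" by blast
    then have "independent (insert (v n) (S \<union> v ` J))"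
      using insert by (intro independent_insertI) auto
    then show ?case by simp
  qed
  then show ?thesis by blast
qed

lemma card_Un_image_separated:
  assumes "finite S" "finite I" "\<And>n. n \<in> I \<Longrightarrow> S \<subseteq> Z n"
    and "\<And>n n'. n \<in> I \<Longrightarrow> n' \<in> I \<Longrightarrow> v n' \<in> Z n \<longleftrightarrow> n' \<noteq> n"
  shows "card (S \<union> v ` I) = card S + card I"
proof -
  have "inj_on v I" by (rule inj_onI) (metis assms(4))
  moreover have "S \<inter> v ` I = {}" using assms(3,4) by fastforce
  ultimately show ?thesis using assms(1,2) by (simp add: card_Un_disjoint card_image)
qed

lemma conf_add: "a \<in> conf m s \<Longrightarrow> b \<in> conf m s \<Longrightarrow> a + b \<in> conf m s"
  by (auto simp: conf_def)

lemma cscale_conf: "a \<in> conf m s \<Longrightarrow> cscale c a \<in> conf m s"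
  by (auto simp: conf_def cscale_def)

lemma zero_conf: "0 \<in> conf m s"
  by (auto simp: conf_def)

lemma continuous_on_snd_apply [continuous_intros]:
  "continuous_on S (\<lambda>x::real \<times> (nat \<times> nat \<Rightarrow> complex). snd x q)"
  by (rule continuous_on_product_then_coordinatewise[OF continuous_on_snd[OF continuous_on_id]])

locale pit_config =
  fixes Q :: pit
  assumes pit: "is_pit Q"
begin

abbreviation "m \<equiv> length Q"
abbreviation "r \<equiv> ramQ Q"
abbreviation "s \<equiv> sQ Q"
abbreviation "K \<equiv> maxslope Q"

definition fac :: "nat \<Rightarrow> expf" where "fac i = snd (Q ! i)"
definition mul :: "nat \<Rightarrow> nat" where "mul i = fst (Q ! i)"
definition R :: "nat \<Rightarrow> nat" where "R i = ram (fac i)"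

definition grid :: "rat set" where "grid = (\<lambda>j. of_nat j / of_nat r) ` {1..s}"

definition fac_of :: "(nat \<times> nat \<Rightarrow> complex) \<Rightarrow> nat \<Rightarrow> expf" where
  "fac_of a i = factor_of r s a i"

lemma expfactor_fac: "i < m \<Longrightarrow> expfactor (fac i)"
  and mul_pos: "i < m \<Longrightarrow> mul i > 0"
  using pit by (auto simp: is_pit_def fac_def mul_def)

lemma R_ge_1: "i < m \<Longrightarrow> R i \<ge> 1"
  and on_grid_R: "i < m \<Longrightarrow> on_grid (fac i) (R i)"
  and not_on_grid_below_R: "i < m \<Longrightarrow> 1 \<le> k \<Longrightarrow> k < R i \<Longrightarrow> \<not> on_grid (fac i) k"
  using ram_on_grid expfactor_on_grid[OF expfactor_fac] unfolding R_def by blast+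

lemma R_dvd_r: "i < m \<Longrightarrow> R i dvd r"
  unfolding ramQ_def R_def fac_def by (intro dvd_Lcm) (auto intro!: imageI nth_mem)

lemma r_ge_1: "r \<ge> 1"
proof -
  have "0 \<notin> set (map (ram \<circ> snd) Q)"
  proof
    assume "0 \<in> set (map (ram \<circ> snd) Q)"
    then obtain i where "i < m" "ram (snd (Q ! i)) = 0" by (auto simp: in_set_conv_nth)
    with R_ge_1[of i] show False by (simp add: R_def fac_def)
  qed
  then have "Lcm (set (map (ram \<circ> snd) Q)) \<noteq> 0" by (metis Lcm_0_iff finite_set)
  then show ?thesis unfolding ramQ_def by linarith
qed

lemma maxslope_nonneg: "K \<ge> 0"
  unfolding maxslope_def by (rule Max_ge_iff[THEN iffD2]) auto

lemma slope_fac_le: "i < m \<Longrightarrow> slope (fac i) \<le> K"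
  unfolding maxslope_def fac_def by (intro Max_ge) auto

lemma finite_grid: "finite grid"
  unfolding grid_def by simp

lemma grid_pos: "e \<in> grid \<Longrightarrow> e > 0"
  using r_ge_1 by (auto simp: grid_def)

lemma mem_grid_iff: "e \<in> grid \<longleftrightarrow> (\<exists>j::nat. 1 \<le> j \<and> j \<le> s \<and> e = of_nat j / of_nat r)"
  unfolding grid_def by auto

lemma fac_of_eq: "fac_of a i e = (if e \<in> grid then a (i, nat \<lfloor>e * of_nat r\<rfloor>) else 0)"
  unfolding fac_of_def factor_of_def mem_grid_iff by simp

lemma fac_of_grid_point: "1 \<le> j \<Longrightarrow> j \<le> s \<Longrightarrow> fac_of a i (of_nat j / of_nat r) = a (i, j)"
  unfolding fac_of_eq mem_grid_iff using r_ge_1 by auto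

lemma fac_of_nonzero_in_grid: "fac_of a i e \<noteq> 0 \<Longrightarrow> e \<in> grid"
  unfolding fac_of_eq by (auto split: if_splits)

lemma fac_of_add: "fac_of (a + b) i e = fac_of a i e + fac_of b i e"
  and fac_of_cscale: "fac_of (cscale c a) i e = c * fac_of a i e"
  and fac_of_zero: "fac_of 0 i e = 0"
  unfolding fac_of_eq cscale_def by auto

lemma fac_nonzero_in_grid:
  assumes i: "i < m" and q: "fac i e \<noteq> 0"
  shows "e \<in> grid"
proof -
  have "on_grid (fac i) r" using on_grid_dvd[OF on_grid_R R_dvd_r] i by blast
  then obtain z :: int where z: "e * of_nat r = of_int z" using q by (auto simp: on_grid_def elim: Ints_cases)
  have rr: "(of_nat r :: rat) > 0" using r_ge_1 by simp
  have "e > 0" using expfactor_fac[OF i] q by (auto simp: expfactor_def)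
  then have zpos: "z > 0" using z rr by (metis mult_pos_pos of_int_0_less_iff)
  have "e \<le> slope (fac i)"
    using q expfactor_fac[OF i] by (auto simp: slope_def expfactor_def intro: Max_ge)
  then have "e \<le> K" using slope_fac_le[OF i] by simp
  then have "of_int z \<le> of_nat r * K" using z rr by (metis mult.commute mult_right_mono less_imp_le)
  then have "z \<le> \<lfloor>of_nat r * K\<rfloor>" by (simp add: le_floor_iff)
  then have "nat z \<le> s" unfolding sQ_def by simp
  moreover have "e = of_nat (nat z) / of_nat r" using z zpos rr by (simp add: field_simps)
  ultimately show ?thesis unfolding mem_grid_iff using zpos by (intro exI[of _ "nat z"]) auto
qed

definition base_config :: "nat \<times> nat \<Rightarrow> complex" where
  "base_config = (\<lambda>(i, j). if i < m \<and> 1 \<le> j \<and> j \<le> s then fac i (of_nat j / of_nat r) else 0)"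

lemma fac_of_base_config: "i < m \<Longrightarrow> fac_of base_config i = fac i"
proof
  fix e assume i: "i < m"
  show "fac_of base_config i e = fac i e"
  proof (cases "e \<in> grid")
    case True
    then obtain j where "1 \<le> j" "j \<le> s" "e = of_nat j / of_nat r" by (auto simp: mem_grid_iff)
    then show ?thesis using fac_of_grid_point i by (simp add: base_config_def)
  next
    case False
    then show ?thesis using fac_nonzero_in_grid[OF i] by (auto simp: fac_of_eq)
  qed
qed

lemma Q_a_nth: "i < m \<Longrightarrow> Q_a Q a ! i = (mul i, fac_of a i)"
  by (simp add: Q_a_def mul_def fac_of_def)

lemma length_Q_a: "length (Q_a Q a) = m"
  by (simp add: Q_a_def)

lemma base_config_in_Bsp: "base_config \<in> Bsp Q"
proof -
  have "Q_a Q base_config = Q"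
    by (rule nth_equalityI) (auto simp: length_Q_a Q_a_nth fac_of_base_config mul_def fac_def)
  moreover have "base_config \<in> conf m s" by (auto simp: conf_def base_config_def)
  ultimately show ?thesis using pit by (simp add: Bsp_def pit_equiv_def)
qed

subsection \<open>Twisted differences\<close>

definition twdiff :: "(nat \<times> nat \<Rightarrow> complex) \<Rightarrow> nat \<Rightarrow> nat \<Rightarrow> nat \<Rightarrow> nat \<Rightarrow> expf" where
  "twdiff a i j k l = fdiff ((gal ^^ k) (fac_of a i)) ((gal ^^ l) (fac_of a j))"

definition twslope :: "nat \<Rightarrow> nat \<Rightarrow> nat \<Rightarrow> nat \<Rightarrow> rat" where
  "twslope i j k l = slope (fdiff ((gal ^^ k) (fac i)) ((gal ^^ l) (fac j)))"

definition slopes_match :: "(nat \<times> nat \<Rightarrow> complex) \<Rightarrow> bool" where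
  "slopes_match a \<longleftrightarrow>
     (\<forall>i<m. \<forall>j<m. \<forall>k\<le>R i. \<forall>l\<le>R j. slope (twdiff a i j k l) = twslope i j k l)"

lemma twdiff_apply: "twdiff a i j k l e = gal_root e ^ k * fac_of a i e - gal_root e ^ l * fac_of a j e"
  by (simp add: twdiff_def fdiff_def funpow_gal)

lemma twdiff_nonzero_in_grid:
  assumes "twdiff a i j k l e \<noteq> 0"
  shows "e \<in> grid"
proof (rule ccontr)
  assume "e \<notin> grid"
  then have "fac_of a i e = 0" "fac_of a j e = 0" using fac_of_nonzero_in_grid by blast+
  then show False using assms by (simp add: twdiff_apply)
qed

lemma expfactor_twdiff: "expfactor (twdiff a i j k l)"
proof -
  have "finite {e. twdiff a i j k l e \<noteq> 0}"
    by (rule finite_subset[OF _ finite_grid]) (auto dest: twdiff_nonzero_in_grid)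
  then show ?thesis unfolding expfactor_def using twdiff_nonzero_in_grid grid_pos by blast
qed

lemma slope_twdiff_eq_0_iff:
  "slope (twdiff a i j k l) = 0 \<longleftrightarrow> (gal ^^ k) (fac_of a i) = (gal ^^ l) (fac_of a j)"
  by (simp add: slope_eq_0_iff[OF expfactor_twdiff]) (auto simp: twdiff_def fdiff_def fun_eq_iff)

lemma twslope_eq: "i < m \<Longrightarrow> j < m \<Longrightarrow> twslope i j k l = slope (twdiff base_config i j k l)"
  by (simp add: twslope_def twdiff_def fac_of_base_config)

lemma twslope_nonneg: "i < m \<Longrightarrow> j < m \<Longrightarrow> twslope i j k l \<ge> 0"
  by (simp add: twslope_eq slope_nonneg[OF expfactor_twdiff])

lemma twslope_eq_0_iff:
  "i < m \<Longrightarrow> j < m \<Longrightarrow> twslope i j k l = 0 \<longleftrightarrow> (gal ^^ k) (fac i) = (gal ^^ l) (fac j)"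
  by (simp add: twslope_eq slope_twdiff_eq_0_iff fac_of_base_config)

lemma slopes_match_on_grid_iff:
  assumes "slopes_match a" "i < m" "k \<le> R i"
  shows "on_grid (fac_of a i) k \<longleftrightarrow> on_grid (fac i) k"
proof -
  have "slope (twdiff a i i k 0) = twslope i i k 0" using assms by (auto simp: slopes_match_def)
  then have "slope (twdiff a i i k 0) = 0 \<longleftrightarrow> twslope i i k 0 = 0" by simp
  then show ?thesis
    by (simp add: slope_twdiff_eq_0_iff twslope_eq_0_iff[OF assms(2,2)] funpow_gal_fixed_iff)
qed

lemma slopes_match_is_pit:
  assumes c: "slopes_match a"
  shows "is_pit (Q_a Q a)"
  unfolding is_pit_def length_Q_a
proof (intro conjI allI impI)
  fix i assume i: "i < m"
  show "0 < fst (Q_a Q a ! i)" using mul_pos[OF i] by (simp add: Q_a_nth[OF i])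
  have "finite {e. fac_of a i e \<noteq> 0}"
    by (rule finite_subset[OF _ finite_grid]) (auto dest: fac_of_nonzero_in_grid)
  then show "expfactor (snd (Q_a Q a ! i))"
    using fac_of_nonzero_in_grid grid_pos by (auto simp: Q_a_nth[OF i] expfactor_def)
next
  fix i j t assume i: "i < m" and j: "j < m" and ij: "i \<noteq> j"
  let ?k = "t mod R i"
  have "?k \<le> R i" using R_ge_1[OF i] by simp
  then have "slope (twdiff a i j ?k 0) = twslope i j ?k 0" using c i j by (auto simp: slopes_match_def)
  moreover have "twslope i j ?k 0 \<noteq> 0"
    using pit i j ij by (simp add: twslope_eq_0_iff is_pit_def fac_def)
  ultimately have "(gal ^^ ?k) (fac_of a i) \<noteq> fac_of a j"
    using slope_twdiff_eq_0_iff[of a i j ?k 0] by simp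
  moreover have "(gal ^^ t) (fac_of a i) = (gal ^^ ?k) (fac_of a i)"
    using slopes_match_on_grid_iff[OF c i] on_grid_R[OF i]
    by (intro funpow_gal_mod) (simp add: funpow_gal_fixed_iff)
  ultimately show "(gal ^^ t) (snd (Q_a Q a ! i)) \<noteq> snd (Q_a Q a ! j)"
    by (simp add: Q_a_nth[OF i] Q_a_nth[OF j])
qed

lemma Bsp_iff_slopes_match:
  assumes "a \<in> conf m s"
  shows "a \<in> Bsp Q \<longleftrightarrow> slopes_match a"
proof -
  have "map fst (Q_a Q a) = map fst Q"
    by (rule nth_equalityI) (auto simp: length_Q_a Q_a_nth mul_def)
  moreover have "slopes_match a \<longleftrightarrow> (\<forall>i<m. \<forall>j<m. \<forall>k\<le>ram (snd (Q ! i)). \<forall>l\<le>ram (snd (Q ! j)).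
        slope (fdiff ((gal ^^ k) (snd (Q_a Q a ! i))) ((gal ^^ l) (snd (Q_a Q a ! j))))
      = slope (fdiff ((gal ^^ k) (snd (Q ! i))) ((gal ^^ l) (snd (Q ! j)))))"
    by (simp add: slopes_match_def Q_a_nth twdiff_def twslope_def fac_def R_def)
  ultimately have "Q_a Q a \<sim>\<^sub>p Q \<longleftrightarrow> slopes_match a"
    using pit slopes_match_is_pit by (auto simp: pit_equiv_def length_Q_a)
  then show ?thesis using assms by (simp add: Bsp_def)
qed

lemma Bsp_subset_conf: "Bsp Q \<subseteq> conf m s"
  by (auto simp: Bsp_def)

subsection \<open>\<open>B(Q)\<close> is open in a linear subspace\<close>

definition below_slopes :: "(nat \<times> nat \<Rightarrow> complex) set" where
  "below_slopes = {a \<in> conf m s. \<forall>i<m. \<forall>j<m. \<forall>k\<le>R i. \<forall>l\<le>R j.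
     \<forall>e > twslope i j k l. twdiff a i j k l e = 0}"

definition leading_nonzero :: "(nat \<times> nat \<Rightarrow> complex) set" where
  "leading_nonzero = {a. \<forall>i<m. \<forall>j<m. \<forall>k\<le>R i. \<forall>l\<le>R j.
     twslope i j k l \<noteq> 0 \<longrightarrow> twdiff a i j k l (twslope i j k l) \<noteq> 0}"

lemma slopes_match_iff: "slopes_match a \<longleftrightarrow> (\<forall>i<m. \<forall>j<m. \<forall>k\<le>R i. \<forall>l\<le>R j.
    (\<forall>e > twslope i j k l. twdiff a i j k l e = 0) \<and>
    (twslope i j k l \<noteq> 0 \<longrightarrow> twdiff a i j k l (twslope i j k l) \<noteq> 0))"
  unfolding slopes_match_def using slope_eq_iff[OF expfactor_twdiff twslope_nonneg] by simp

lemma Bsp_eq: "Bsp Q = below_slopes \<inter> leading_nonzero"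
proof (intro set_eqI iffI)
  fix a assume "a \<in> Bsp Q"
  then have "a \<in> conf m s" "slopes_match a"
    using Bsp_iff_slopes_match Bsp_subset_conf by blast+
  then show "a \<in> below_slopes \<inter> leading_nonzero"
    unfolding slopes_match_iff below_slopes_def leading_nonzero_def by simp
next
  fix a assume "a \<in> below_slopes \<inter> leading_nonzero"
  then have "a \<in> conf m s" "slopes_match a"
    unfolding slopes_match_iff below_slopes_def leading_nonzero_def by simp_all
  then show "a \<in> Bsp Q" using Bsp_iff_slopes_match by blast
qed

lemma twdiff_add: "twdiff (a + b) i j k l e = twdiff a i j k l e + twdiff b i j k l e"
  and twdiff_cscale: "twdiff (cscale c a) i j k l e = c * twdiff a i j k l e"
  and twdiff_zero: "twdiff 0 i j k l e = 0"
  by (simp_all add: twdiff_apply fac_of_add fac_of_cscale fac_of_zero algebra_simps)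

lemma subspace_below_slopes: "cvs.subspace below_slopes"
  unfolding cvs.subspace_def below_slopes_def
  by (auto simp: twdiff_add twdiff_cscale twdiff_zero conf_add cscale_conf zero_conf)

lemma continuous_on_twdiff: "continuous_on UNIV (\<lambda>a. twdiff a i j k l e)"
proof -
  have "continuous_on UNIV (\<lambda>a. fac_of a i e)" for i
    unfolding fac_of_eq by (cases "e \<in> grid") (auto intro: continuous_on_product_coordinates)
  then show ?thesis unfolding twdiff_apply by (intro continuous_intros)
qed

lemma open_leading_nonzero: "open leading_nonzero"
proof -
  define U where "U i j k l = {a. twslope i j k l \<noteq> 0 \<longrightarrow> twdiff a i j k l (twslope i j k l) \<noteq> 0}"
    for i j k l
  have "open (U i j k l)" for i j k l
  proof (cases "twslope i j k l = 0")
    case False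
    have "open {a. twdiff a i j k l (twslope i j k l) \<noteq> (\<lambda>_. 0) a}"
      by (rule open_Collect_neq[OF continuous_on_twdiff continuous_on_const])
    then show ?thesis using False by (simp add: U_def)
  qed (simp add: U_def)
  moreover have "leading_nonzero = (\<Inter>i\<in>{..<m}. \<Inter>j\<in>{..<m}. \<Inter>k\<in>{..R i}. \<Inter>l\<in>{..R j}. U i j k l)"
    unfolding leading_nonzero_def U_def by (simp add: set_eq_iff lessThan_def atMost_def)
  ultimately show ?thesis by (simp add: open_INT)
qed

lemma Bsp_openin: "openin (top_of_set (cspan (Bsp Q))) (Bsp Q)"
  unfolding Bsp_eq by (rule openin_cspan_subspace_Int_open[OF subspace_below_slopes open_leading_nonzero])

subsection \<open>The trace conditions\<close>

definition nK :: nat where "nK = nat \<lfloor>K\<rfloor>"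

lemma mult_r_le_s_iff: "n * r \<le> s \<longleftrightarrow> n \<le> nK"
proof -
  have rr: "(of_nat r :: rat) > 0" using r_ge_1 by simp
  have "n * r \<le> s \<longleftrightarrow> int (n * r) \<le> \<lfloor>of_nat r * K\<rfloor>"
    unfolding sQ_def using maxslope_nonneg rr by (simp add: le_nat_iff)
  also have "\<dots> \<longleftrightarrow> of_nat r * of_nat n \<le> of_nat r * K" by (simp add: le_floor_iff mult.commute)
  also have "\<dots> \<longleftrightarrow> int n \<le> \<lfloor>K\<rfloor>" using rr by (simp add: le_floor_iff)
  also have "\<dots> \<longleftrightarrow> n \<le> nK" unfolding nK_def using maxslope_nonneg by (simp add: le_nat_iff)
  finally show ?thesis .
qed

definition trace_coeff :: "(nat \<times> nat \<Rightarrow> complex) \<Rightarrow> nat \<Rightarrow> complex" where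
  "trace_coeff a n = (\<Sum>i<m. of_nat (mul i) * of_nat (R i) * a (i, n * r))"

definition traceless :: "(nat \<times> nat \<Rightarrow> complex) set" where
  "traceless = {a. \<forall>n\<in>{1..nK}. trace_coeff a n = 0}"

lemma on_grid_fac_of_R: "a \<in> Bsp Q \<Longrightarrow> i < m \<Longrightarrow> on_grid (fac_of a i) (R i)"
  using slopes_match_on_grid_iff on_grid_R Bsp_iff_slopes_match Bsp_subset_conf by blast

lemma ram_fac_of:
  assumes "a \<in> Bsp Q" "i < m"
  shows "ram (fac_of a i) = R i"
proof (rule ram_eqI)
  have c: "slopes_match a" using assms(1) Bsp_iff_slopes_match Bsp_subset_conf by blast
  show "1 \<le> R i" using R_ge_1[OF assms(2)] .
  show "on_grid (fac_of a i) (R i)" using on_grid_fac_of_R[OF assms] .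
  fix k assume "1 \<le> k" "k < R i"
  then show "\<not> on_grid (fac_of a i) k"
    using slopes_match_on_grid_iff[OF c assms(2), of k] not_on_grid_below_R[OF assms(2)] by simp
qed

lemma Tr_Q_a:
  assumes "a \<in> Bsp Q"
  shows "Tr (Q_a Q a) e =
    (if e \<in> \<int> then \<Sum>i<m. of_nat (mul i) * (of_nat (R i) * fac_of a i e) else 0)"
proof -
  have "Tr (Q_a Q a) e = (\<Sum>i<m. of_nat (mul i) * (\<Sum>t<R i. (gal ^^ t) (fac_of a i) e))"
    unfolding Tr_def length_Q_a by (intro sum.cong refl) (simp add: Q_a_nth ram_fac_of[OF assms])
  also have "\<dots> = (\<Sum>i<m. of_nat (mul i) * (if e \<in> \<int> then of_nat (R i) * fac_of a i e else 0))"
    by (intro sum.cong refl)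
      (simp add: sum_funpow_gal[OF on_grid_fac_of_R[OF assms] R_ge_1])
  finally show ?thesis by simp
qed

lemma fac_of_of_nat:
  assumes "1 \<le> n" "n * r \<le> s"
  shows "fac_of a i (of_nat n) = a (i, n * r)"
proof -
  have "(of_nat n :: rat) = of_nat (n * r) / of_nat r" using r_ge_1 by simp
  moreover have "1 \<le> n * r" using assms(1) r_ge_1 by simp
  ultimately show ?thesis using fac_of_grid_point[of "n * r" a i] assms by simp
qed

lemma Ints_grid_cases:
  assumes "e \<in> \<int>" "e \<in> grid"
  obtains n where "n \<in> {1..nK}" "e = of_nat n"
proof -
  obtain j where j: "1 \<le> j" "j \<le> s" "e = of_nat j / of_nat r" using assms(2) by (auto simp: mem_grid_iff)
  obtain z :: int where z: "e = of_int z" using assms(1) by (auto elim: Ints_cases)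
  have "(of_nat j :: rat) = of_int z * of_nat r" using j z r_ge_1 by (simp add: field_simps)
  then have jz: "int j = z * int r" by (metis of_int_eq_iff of_int_mult of_int_of_nat_eq)
  then have "z * int r > 0" using j(1) by linarith
  then have zpos: "z > 0" using r_ge_1 by (simp add: zero_less_mult_iff)
  have "int (nat z * r) = int j" using jz zpos by simp
  then have "nat z * r = j" by (simp only: of_nat_eq_iff)
  then have "nat z \<in> {1..nK}" using zpos j(2) mult_r_le_s_iff by auto
  moreover have "e = of_nat (nat z)" using z zpos by simp
  ultimately show ?thesis by (rule that)
qed

lemma Tr_Q_a_eq_0_iff:
  assumes "a \<in> Bsp Q"
  shows "Tr (Q_a Q a) = (\<lambda>_. 0) \<longleftrightarrow> a \<in> traceless"
proof -
  define P where "P e = (\<Sum>i<m. of_nat (mul i) * (of_nat (R i) * fac_of a i e))" for e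
  have P_of_nat: "P (of_nat n) = trace_coeff a n" if "n \<in> {1..nK}" for n
    using that fac_of_of_nat[of n] mult_r_le_s_iff
    unfolding P_def trace_coeff_def by (simp add: mult_ac)
  have "Tr (Q_a Q a) = (\<lambda>_. 0) \<longleftrightarrow> (\<forall>e\<in>\<int>. P e = 0)"
    by (auto simp: fun_eq_iff Tr_Q_a[OF assms] P_def)
  also have "\<dots> \<longleftrightarrow> (\<forall>n\<in>{1..nK}. P (of_nat n) = 0)"
  proof
    assume "\<forall>n\<in>{1..nK}. P (of_nat n) = 0"
    moreover have "P e = 0" if "e \<notin> grid" for e
    proof -
      have "fac_of a i e = 0" for i using that fac_of_nonzero_in_grid by blast
      then show ?thesis by (simp add: P_def)
    qed
    ultimately show "\<forall>e\<in>\<int>. P e = 0" by (metis Ints_grid_cases)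
  qed auto
  also have "\<dots> \<longleftrightarrow> a \<in> traceless"
    by (simp add: traceless_def P_of_nat)
  finally show ?thesis .
qed

lemma SBsp_eq: "SBsp Q = Bsp Q \<inter> traceless"
  using Tr_Q_a_eq_0_iff by (auto simp: SBsp_def)

lemma SBsp_subset_Bsp: "SBsp Q \<subseteq> Bsp Q"
  by (auto simp: SBsp_def)

lemma trace_coeff_add: "trace_coeff (a + b) n = trace_coeff a n + trace_coeff b n"
  and trace_coeff_cscale: "trace_coeff (cscale c a) n = c * trace_coeff a n"
  and trace_coeff_zero: "trace_coeff 0 n = 0"
  by (simp_all add: trace_coeff_def algebra_simps sum.distrib cscale_def sum_distrib_left)

lemma subspace_trace_coeff_eq_0: "cvs.subspace {a. trace_coeff a n = 0}"
  unfolding cvs.subspace_def by (simp add: trace_coeff_add trace_coeff_cscale trace_coeff_zero)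

lemma subspace_traceless: "cvs.subspace traceless"
  unfolding cvs.subspace_def traceless_def
  by (simp add: trace_coeff_add trace_coeff_cscale trace_coeff_zero)

lemma SBsp_openin: "openin (top_of_set (cspan (SBsp Q))) (SBsp Q)"
proof -
  have "SBsp Q = (below_slopes \<inter> traceless) \<inter> leading_nonzero" using SBsp_eq Bsp_eq by blast
  then show ?thesis
    using openin_cspan_subspace_Int_open[OF cvs.subspace_inter[OF subspace_below_slopes
        subspace_traceless] open_leading_nonzero] by simp
qed

subsection \<open>Shifting every factor by the same polynomial\<close>

text \<open>\<open>shift c\<close> adds \<open>\<Sum>n. c n x\<^sup>n\<close> (with \<open>1 \<le> n \<le> \<lfloor>K\<rfloor>\<close>) to every factor.\<close>

definition shift :: "(nat \<Rightarrow> complex) \<Rightarrow> nat \<times> nat \<Rightarrow> complex" where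
  "shift c = (\<lambda>(i, j). if i < m \<and> 1 \<le> j \<and> j \<le> s \<and> r dvd j then c (j div r) else 0)"

definition weight :: complex where
  "weight = (\<Sum>i<m. of_nat (mul i) * of_nat (R i))"

lemma shift_in_conf: "shift c \<in> conf m s"
  by (auto simp: conf_def shift_def)

lemma shift_add: "shift c + shift c' = shift (\<lambda>n. c n + c' n)"
  by (rule ext) (simp add: shift_def split: prod.split)

lemma shift_zero: "shift (\<lambda>_. 0) = 0"
  by (rule ext) (simp add: shift_def split: prod.split)

lemma gal_root_pow_fac_of_shift: "gal_root e ^ k * fac_of (shift c) i e = fac_of (shift c) i e"
proof (cases "fac_of (shift c) i e = 0")
  case False
  then obtain j where j: "1 \<le> j" "j \<le> s" "e = of_nat j / of_nat r"
    using fac_of_nonzero_in_grid[OF False] unfolding mem_grid_iff by blast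
  have "fac_of (shift c) i e = shift c (i, j)" using fac_of_grid_point[OF j(1,2)] j(3) by simp
  then have "r dvd j" using False by (auto simp: shift_def split: if_splits)
  then obtain t where "j = r * t" by (auto elim: dvdE)
  then have "e = of_nat t" using j(3) r_ge_1 by simp
  then have "gal_root e = 1" by (simp add: gal_root_eq_1_iff)
  then show ?thesis by simp
qed simp

lemma fac_of_shift_eq: "i < m \<Longrightarrow> j < m \<Longrightarrow> fac_of (shift c) i e = fac_of (shift c) j e"
  by (simp add: fac_of_eq shift_def)

lemma twdiff_shift: "i < m \<Longrightarrow> j < m \<Longrightarrow> twdiff (shift c) i j k l e = 0"
  by (simp add: twdiff_apply gal_root_pow_fac_of_shift fac_of_shift_eq[of i j])

lemma twdiff_add_shift: "i < m \<Longrightarrow> j < m \<Longrightarrow> twdiff (a + shift c) i j k l = twdiff a i j k l"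
  by (rule ext) (simp add: twdiff_add twdiff_shift)

lemma Bsp_add_shift:
  assumes "a \<in> Bsp Q"
  shows "a + shift c \<in> Bsp Q"
proof -
  have "a \<in> conf m s" using assms Bsp_subset_conf by blast
  then have "a + shift c \<in> conf m s" using shift_in_conf by (rule conf_add)
  moreover have "slopes_match (a + shift c) \<longleftrightarrow> slopes_match a"
    unfolding slopes_match_def by (simp add: twdiff_add_shift)
  ultimately show ?thesis using assms Bsp_iff_slopes_match Bsp_subset_conf by blast
qed

lemma shift_at_multiple:
  assumes "n \<in> {1..nK}" "i < m"
  shows "shift c (i, n * r) = c n"
proof -
  have "1 \<le> n * r" using assms(1) r_ge_1 by simp
  moreover have "n * r \<le> s" using assms(1) mult_r_le_s_iff by simp
  moreover have "n * r div r = n" using r_ge_1 by simp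
  ultimately show ?thesis using assms(2) by (simp add: shift_def)
qed

lemma trace_coeff_shift:
  assumes "n \<in> {1..nK}"
  shows "trace_coeff (shift c) n = weight * c n"
  unfolding trace_coeff_def weight_def sum_distrib_right
  by (intro sum.cong refl) (simp add: shift_at_multiple[OF assms])

lemma shift_eq_0:
  assumes "\<And>n. n \<in> {1..nK} \<Longrightarrow> c n = 0"
  shows "shift c = 0"
proof (rule ext, clarify)
  fix i j
  show "shift c (i, j) = 0 (i, j)"
  proof (cases "i < m \<and> 1 \<le> j \<and> j \<le> s \<and> r dvd j")
    case True
    then obtain t where t: "j = r * t" by (auto elim: dvdE)
    have "j div r = t" using t r_ge_1 by simp
    moreover have "1 \<le> t" using True t by (cases t) auto
    moreover have "t * r \<le> s" using True t by (simp add: mult.commute)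
    ultimately show ?thesis using True assms mult_r_le_s_iff by (simp add: shift_def)
  qed (auto simp: shift_def)
qed

lemma weight_nonzero:
  assumes "n \<in> {1..nK}"
  shows "weight \<noteq> 0"
proof -
  have "Q \<noteq> []"
  proof
    assume "Q = []"
    then have "K = 0" by (simp add: maxslope_def)
    then have "nK = 0" by (simp add: nK_def)
    then show False using assms by simp
  qed
  then have m: "0 < m" by simp
  have "mul 0 * R 0 \<le> (\<Sum>i<m. mul i * R i)" using m by (intro member_le_sum) auto
  moreover have "mul 0 * R 0 > 0" using mul_pos[OF m] R_ge_1[OF m] by simp
  ultimately have "(\<Sum>i<m. mul i * R i) \<noteq> 0" by linarith
  moreover have "weight = of_nat (\<Sum>i<m. mul i * R i)" by (simp add: weight_def)
  ultimately show ?thesis by (simp only: of_nat_eq_0_iff not_False_eq_True)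
qed

subsection \<open>The deformation retraction\<close>

definition mean :: "(nat \<times> nat \<Rightarrow> complex) \<Rightarrow> nat \<Rightarrow> complex" where
  "mean a n = trace_coeff a n * inverse weight"

definition slide :: "real \<times> (nat \<times> nat \<Rightarrow> complex) \<Rightarrow> nat \<times> nat \<Rightarrow> complex" where
  "slide x = snd x + shift (\<lambda>n. - of_real (1 - fst x) * mean (snd x) n)"

definition retract :: "(nat \<times> nat \<Rightarrow> complex) \<Rightarrow> nat \<times> nat \<Rightarrow> complex" where
  "retract a = slide (0, a)"

lemma slide_1: "slide (1, a) = a"
  by (simp add: slide_def shift_zero)

lemma slide_in_Bsp: "a \<in> Bsp Q \<Longrightarrow> slide (t, a) \<in> Bsp Q"
  unfolding slide_def by (simp add: Bsp_add_shift)

lemma retract_eq: "retract a = a + shift (\<lambda>n. - mean a n)"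
  by (simp add: retract_def slide_def)

lemma retract_in_SBsp:
  assumes "a \<in> Bsp Q"
  shows "retract a \<in> SBsp Q"
proof -
  have "trace_coeff (retract a) n = 0" if n: "n \<in> {1..nK}" for n
  proof -
    have "trace_coeff (retract a) n = trace_coeff a n + weight * - (trace_coeff a n * inverse weight)"
      using n by (simp add: retract_eq trace_coeff_add trace_coeff_shift mean_def)
    then show ?thesis using weight_nonzero[OF n] by simp
  qed
  then have "retract a \<in> traceless" by (simp add: traceless_def)
  moreover have "retract a \<in> Bsp Q" unfolding retract_def using assms by (rule slide_in_Bsp)
  ultimately show ?thesis using SBsp_eq by blast
qed

lemma retract_id:
  assumes "a \<in> SBsp Q"
  shows "retract a = a"
proof -
  have "mean a n = 0" if "n \<in> {1..nK}" for n
    using that assms by (simp add: SBsp_eq traceless_def mean_def)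
  then have "shift (\<lambda>n. - mean a n) = 0" by (intro shift_eq_0) simp
  then show ?thesis by (simp add: retract_eq)
qed

lemma retract_add_shift_mean: "retract a + shift (mean a) = a"
  by (simp add: retract_eq add.assoc shift_add shift_zero)

lemma slide_apply: "slide x (i, j) = snd x (i, j) +
   (if i < m \<and> 1 \<le> j \<and> j \<le> s \<and> r dvd j
    then - of_real (1 - fst x) *
      ((\<Sum>i'<m. of_nat (mul i') * of_nat (R i') * snd x (i', (j div r) * r)) * inverse weight)
    else 0)"
  by (simp add: slide_def shift_def mean_def trace_coeff_def)

lemma continuous_on_slide: "continuous_on UNIV slide"
proof (rule continuous_on_coordinatewise_then_product, clarify)
  fix i j
  show "continuous_on UNIV (\<lambda>x. slide x (i, j))"
    unfolding slide_apply
    by (cases "i < m \<and> 1 \<le> j \<and> j \<le> s \<and> r dvd j") (auto intro!: continuous_intros)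
qed

lemma continuous_on_retract: "continuous_on UNIV retract"
proof -
  have "continuous_on UNIV (\<lambda>a. slide (0, a))"
    by (rule continuous_on_compose2[OF continuous_on_slide
          continuous_on_Pair[OF continuous_on_const continuous_on_id]]) simp
  then show ?thesis by (simp add: retract_def[abs_def])
qed

lemma SBsp_homotopy_equivalent_Bsp:
  "top_of_set (SBsp Q) homotopy_equivalent_space top_of_set (Bsp Q)"
proof -
  let ?X = "top_of_set (Bsp Q)" and ?Y = "top_of_set (SBsp Q)"
  have "homotopic_with (\<lambda>x. True) ?X ?X retract id"
    unfolding homotopic_with_def
  proof (intro exI[of _ slide] conjI allI ballI)
    show "continuous_map (prod_topology (top_of_set {0..1}) ?X) ?X slide"
      unfolding prod_topology_subtopology_eu continuous_map_subtopology_eu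
      using continuous_on_subset[OF continuous_on_slide] slide_in_Bsp by auto
  qed (auto simp: retract_def slide_1)
  moreover have "retraction_maps ?X ?Y retract id"
    unfolding retraction_maps_def continuous_map_subtopology_eu
    using continuous_on_subset[OF continuous_on_retract] retract_in_SBsp retract_id SBsp_subset_Bsp
    by (auto intro: continuous_on_id)
  ultimately have "?X homotopy_equivalent_space ?Y"
    by (rule deformation_retract_imp_homotopy_equivalent_space)
  then show ?thesis by (rule homotopy_equivalent_space_sym[THEN iffD1])
qed

subsection \<open>Dimension count\<close>

definition shift_unit :: "nat \<Rightarrow> nat \<times> nat \<Rightarrow> complex" where
  "shift_unit n = shift (\<lambda>k. if k = n then 1 else 0)"

definition unit_config :: "nat \<times> nat \<Rightarrow> nat \<times> nat \<Rightarrow> complex" where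
  "unit_config ij = (\<lambda>x. if x = ij then 1 else 0)"

lemma shift_eq_sum_shift_unit: "shift c = (\<Sum>n\<in>{1..nK}. cscale (c n) (shift_unit n))"
proof (rule ext, clarify)
  fix i j
  show "shift c (i, j) = (\<Sum>n\<in>{1..nK}. cscale (c n) (shift_unit n)) (i, j)"
  proof (cases "i < m \<and> 1 \<le> j \<and> j \<le> s \<and> r dvd j")
    case True
    then obtain t where t: "j = r * t" by (auto elim: dvdE)
    have jt: "j div r = t" using t r_ge_1 by simp
    have "1 \<le> t" using True t by (cases t) auto
    moreover have "t * r \<le> s" using True t by (simp add: mult.commute)
    ultimately have t_range: "t \<in> {1..nK}" using mult_r_le_s_iff by simp
    have "(\<Sum>n\<in>{1..nK}. cscale (c n) (shift_unit n)) (i, j) = (\<Sum>n\<in>{1..nK}. if t = n then c n else 0)"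
      unfolding sum_apply using True by (intro sum.cong refl) (simp add: cscale_def shift_unit_def shift_def jt)
    also have "\<dots> = c t" using t_range by simp
    finally show ?thesis using True by (simp add: shift_def jt)
  next
    case False
    then have "cscale (c n) (shift_unit n) (i, j) = 0" for n
      by (auto simp: cscale_def shift_unit_def shift_def)
    then show ?thesis using False by (auto simp: sum_apply shift_def)
  qed
qed

lemma shift_in_span_shift_unit: "shift c \<in> cvs.span (shift_unit ` {1..nK})"
  unfolding shift_eq_sum_shift_unit by (intro cvs.span_sum cvs.span_scale cvs.span_base) auto

lemma shift_in_span_Bsp: "shift c \<in> cvs.span (Bsp Q)"
proof -
  have "(base_config + shift c) - base_config \<in> cvs.span (Bsp Q)"
    by (intro cvs.span_diff cvs.span_base Bsp_add_shift base_config_in_Bsp)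
  then show ?thesis by simp
qed

lemma conf_subset_span_unit_config: "conf m s \<subseteq> cvs.span (unit_config ` ({..<m} \<times> {1..s}))"
proof
  fix a assume a: "a \<in> conf m s"
  have "a = (\<Sum>ij\<in>{..<m} \<times> {1..s}. cscale (a ij) (unit_config ij))"
  proof (rule ext)
    fix x :: "nat \<times> nat"
    have "(\<Sum>ij\<in>{..<m} \<times> {1..s}. cscale (a ij) (unit_config ij)) x
        = (\<Sum>ij\<in>{..<m} \<times> {1..s}. if x = ij then a ij else 0)"
      unfolding sum_apply by (intro sum.cong refl) (auto simp: cscale_def unit_config_def)
    also have "\<dots> = a x" using a by (cases x) (auto simp: conf_def Suc_le_eq)
    finally show "a x = (\<Sum>ij\<in>{..<m} \<times> {1..s}. cscale (a ij) (unit_config ij)) x" by simp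
  qed
  also have "\<dots> \<in> cvs.span (unit_config ` ({..<m} \<times> {1..s}))"
    by (intro cvs.span_sum cvs.span_scale cvs.span_base) auto
  finally show "a \<in> cvs.span (unit_config ` ({..<m} \<times> {1..s}))" .
qed

lemma Bsp_subset_span_Un_shift_unit:
  assumes "SBsp Q \<subseteq> cvs.span S"
  shows "Bsp Q \<subseteq> cvs.span (S \<union> shift_unit ` {1..nK})" (is "_ \<subseteq> cvs.span ?E")
proof
  fix a assume "a \<in> Bsp Q"
  then have "retract a \<in> cvs.span ?E" using retract_in_SBsp assms cvs.span_mono[of S ?E] by blast
  moreover have "shift (mean a) \<in> cvs.span ?E"
    using shift_in_span_shift_unit cvs.span_mono[of "shift_unit ` {1..nK}" ?E] by blast
  ultimately have "retract a + shift (mean a) \<in> cvs.span ?E" by (rule cvs.span_add)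
  then show "a \<in> cvs.span ?E" by (simp only: retract_add_shift_mean)
qed

lemma cdim_Bsp: "cdim (Bsp Q) = cdim (SBsp Q) + nK"
proof -
  obtain S where S: "S \<subseteq> SBsp Q" "cvs.independent S" "SBsp Q \<subseteq> cvs.span S"
      "card S = cvs.dim (SBsp Q)"
    by (rule cvs.basis_exists)
  have "S \<subseteq> cvs.span (unit_config ` ({..<m} \<times> {1..s}))"
    using S(1) SBsp_subset_Bsp Bsp_subset_conf conf_subset_span_unit_config by blast
  moreover have "finite (unit_config ` ({..<m} \<times> {1..s}))" by simp
  ultimately have "finite S" using cvs.independent_span_bound[OF _ S(2)] by blast
  define Z where "Z n = {a. trace_coeff a n = 0}" for n
  have S_Z: "S \<subseteq> Z n" if "n \<in> {1..nK}" for n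
    using S(1) that by (auto simp: Z_def SBsp_eq traceless_def)
  have separated: "shift_unit n' \<in> Z n \<longleftrightarrow> n' \<noteq> n" if "n \<in> {1..nK}" "n' \<in> {1..nK}" for n n'
    using that weight_nonzero by (simp add: Z_def shift_unit_def trace_coeff_shift)
  let ?E = "S \<union> shift_unit ` {1..nK}"
  have "?E \<subseteq> cvs.span (Bsp Q)"
    using S(1) SBsp_subset_Bsp shift_in_span_Bsp by (auto simp: shift_unit_def intro: cvs.span_base)
  moreover have "cvs.span (Bsp Q) \<subseteq> cvs.span ?E"
    using Bsp_subset_span_Un_shift_unit[OF S(3)] by (simp add: cvs.span_minimal)
  moreover have "cvs.independent ?E"
    using S(2) S_Z separated subspace_trace_coeff_eq_0
    by (intro cvs.independent_Un_separated[where Z = Z]) (auto simp: Z_def)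
  moreover have "card ?E = card S + nK"
    using card_Un_image_separated[OF \<open>finite S\<close> finite_atLeastAtMost S_Z separated] by simp
  ultimately have "cvs.dim (cvs.span (Bsp Q)) = card S + nK" by (rule cvs.dim_unique)
  then show ?thesis using S(4) by (simp add: cdim_def)
qed

end

theorem mainTheorem9:
  fixes Q :: pit
  assumes "is_pit Q"
  shows "openin (top_of_set (cspan (Bsp Q))) (Bsp Q)
       \<and> openin (top_of_set (cspan (SBsp Q))) (SBsp Q)
       \<and> (top_of_set (SBsp Q)) homotopy_equivalent_space (top_of_set (Bsp Q))
       \<and> int (cdim (SBsp Q)) = int (cdim (Bsp Q)) - \<lfloor>maxslope Q\<rfloor>"
proof -
  interpret pit_config Q by unfold_locales (rule assms)
  have "int nK = \<lfloor>maxslope Q\<rfloor>" unfolding nK_def using maxslope_nonneg by simp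
  then show ?thesis using Bsp_openin SBsp_openin SBsp_homotopy_equivalent_Bsp cdim_Bsp by simp
qed

end
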